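(* Let $r \in \mathbb{Q}_{>0}$ be such that $S_r$ is atomic. The following are equivalent: (1) $r \in \mathbb{N}$; (2) $\omega(S_r) < \infty$; (3) $S_r$ is globally tame; (4) $S_r$ is locally tame.
   Context: For $q \in \mathbb{Q}_{>0}$, $\mathsf{n}(q),\mathsf{d}(q)$ are the positive coprime integers with $q = \mathsf{n}(q)/\mathsf{d}(q)$. $S_r$ is the additive submonoid of $(\mathbb{Q}_{\ge 0},+)$ generated by $\{r^n : n \in \mathbb{N}_0\}$; it is atomic exactly when $r=1$ or $\mathsf{n}(r)>1$. For $x,y \in S_r$, $x \mid_{S_r} y$ means $y = x + w$ for some $w \in S_r$. Omega function: for $x \ne 0$, $\omega(x)$ is the smallest $n \in \mathbb{N}$ such that whenever $x \mid_{S_r} a_1 + \dots + a_t$ for atoms $a_i$, there is $T \subseteq \{1,\dots,t\}$ with $|T| \le n$ and $x \mid_{S_r} \sum_{i \in T} a_i$ (and $\omega(x) = \infty$ if none exists); $\omega(S_r) = \sup\{\omega(a) : a \text{ an atom}\}$. Factorizations are elements of the free commutative monoid $\mathsf{Z}(S_r)$ on the atoms; $\mathsf{Z}(x)$ is the set of factorizations of $x$, $|z|$ is the length. For $z = \sum_a \mu_a a$, $z' = \sum_a \nu_a a$, $\gcd(z,z') = \sum_a \min\{\mu_a,\nu_a\}a$ and $\mathsf{d}(z,z') = \max\{|z|-|\gcd(z,z')|, |z'|-|\gcd(z,z')|\}$. For an atom $a$, the local tame degree $\mathsf{t}(a)$ is the smallest $n \in \mathbb{N}_0 \cup \{\infty\}$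 such that for every $x \in S_r$ with $a \mid_{S_r} x$ and every $z \in \mathsf{Z}(x)$ there exists $z' \in \mathsf{Z}(x)$ containing $a$ with $\mathsf{d}(z,z') \le n$. $S_r$ is locally tame if $\mathsf{t}(a) < \infty$ for every atom $a$, and globally tame if $\mathsf{t}(S_r) = \sup_a \mathsf{t}(a) < \infty$. *)

theory Defs
  imports Complex_Main "HOL-Library.Multiset" "HOL-Library.Extended_Nat"
begin

inductive_set Sr :: "rat \<Rightarrow> rat set" for r :: rat where
  zero: "0 \<in> Sr r"
| gen: "r ^ n \<in> Sr r"
| add: "x \<in> Sr r \<Longrightarrow> y \<in> Sr r \<Longrightarrow> x + y \<in> Sr r"

definition dvdS :: "rat \<Rightarrow> rat \<Rightarrow> rat \<Rightarrow> bool" where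
  "dvdS r x y \<longleftrightarrow> (\<exists>w \<in> Sr r. y = x + w)"

text \<open>Atoms of S_r (the only unit of S_r is 0).\<close>
definition atomsS :: "rat \<Rightarrow> rat set" where
  "atomsS r = {a \<in> Sr r. a \<noteq> 0 \<and>
      (\<forall>b \<in> Sr r. \<forall>c \<in> Sr r. a = b + c \<longrightarrow> b = 0 \<or> c = 0)}"

definition factorizations :: "rat \<Rightarrow> rat \<Rightarrow> rat multiset set" where
  "factorizations r x = {z. set_mset z \<subseteq> atomsS r \<and> sum_mset z = x}"

definition atomic :: "rat \<Rightarrow> bool" where
  "atomic r \<longleftrightarrow> (\<forall>x \<in> Sr r. x \<noteq> 0 \<longrightarrow> factorizations r x \<noteq> {})"

definition omega_bound :: "rat \<Rightarrow> rat \<Rightarrow> nat \<Rightarrow> bool" where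
  "omega_bound r x n \<longleftrightarrow>
     (\<forall>A :: rat multiset. set_mset A \<subseteq> atomsS r \<longrightarrow> dvdS r x (sum_mset A) \<longrightarrow>
        (\<exists>B. B \<subseteq># A \<and> size B \<le> n \<and> dvdS r x (sum_mset B)))"

definition omegaS :: "rat \<Rightarrow> rat \<Rightarrow> enat" where
  "omegaS r x = (if \<exists>n>0. omega_bound r x n
                 then enat (LEAST n. n > 0 \<and> omega_bound r x n) else \<infinity>)"

definition omega_monoid :: "rat \<Rightarrow> enat" where
  "omega_monoid r = (SUP a \<in> atomsS r. omegaS r a)"

definition fdist :: "rat multiset \<Rightarrow> rat multiset \<Rightarrow> nat" where
  "fdist z z' = max (size z - size (z \<inter># z')) (size z' - size (z \<inter># z'))"

definition tame_bound :: "rat \<Rightarrow> rat \<Rightarrow> nat \<Rightarrow> bool" where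
  "tame_bound r a n \<longleftrightarrow>
     (\<forall>x \<in> Sr r. dvdS r a x \<longrightarrow> (\<forall>z \<in> factorizations r x.
        \<exists>z' \<in> factorizations r x. a \<in># z' \<and> fdist z z' \<le> n))"

definition tame_degree :: "rat \<Rightarrow> rat \<Rightarrow> enat" where
  "tame_degree r a = (if \<exists>n. tame_bound r a n
                      then enat (LEAST n. tame_bound r a n) else \<infinity>)"

definition locally_tame :: "rat \<Rightarrow> bool" where
  "locally_tame r \<longleftrightarrow> (\<forall>a \<in> atomsS r. tame_degree r a < \<infinity>)"

definition globally_tame :: "rat \<Rightarrow> bool" where
  "globally_tame r \<longleftrightarrow> (SUP a \<in> atomsS r. tame_degree r a) < \<infinity>"

end

theory Submission
  imports Defs
begin

text \<open>If \<open>r = n \<in> \<nat>\<close>, then \<open>S\<^sub>r = \<nat>\<close> has the single atom \<open>1\<close>, with \<open>\<omega>(1) = 1\<close> and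
  \<open>t(1) = 0\<close>. Otherwise write \<open>r = p / q\<close> in lowest terms with \<open>q \<ge> 2\<close>.
  For \<open>r > 1\<close> all powers \<open>r\<^sup>m\<close> are atoms, and \<open>r\<^sup>m\<close> divides \<open>p\<^sup>m = q\<^sup>m r\<^sup>m\<close>, a sum of
  copies of the atom \<open>1\<close>, but no sum of fewer than \<open>r\<^sup>m\<close> of them; hence \<open>\<omega>(S\<^sub>r) = \<infinity>\<close>.
  Moreover \<open>t(1) = \<infinity>\<close>: a factorization of \<open>p\<^sup>k\<close> that contains \<open>1\<close> but few copies of \<open>r\<^sup>k\<close> has
  more than \<open>k\<close> other atoms: the number of copies of \<open>1\<close> among powers of \<open>r\<close> summing to
  \<open>d r\<^sup>k\<close> is a multiple of \<open>p\<close>, so dividing everything by \<open>r\<close>, each block of \<open>p\<close> ones becoming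
  \<open>q\<close> ones, gives a strictly shorter such multiset summing to \<open>d r\<^sup>k\<^sup>-\<^sup>1\<close>.
  For \<open>r < 1\<close> atomicity forces \<open>p \<ge> 2\<close>, so \<open>1\<close> is an atom; atomicity also provides
  arbitrarily small atoms \<open>b\<close>, and an integer multiple of \<open>b\<close> shows \<open>\<omega>(1) = \<infinity>\<close>. Since
  \<open>\<omega>(a) \<le> max 1 t(a)\<close> in any cancellative monoid, also \<open>t(1) = \<infinity>\<close>.\<close>

lemma ex_less_power:
  fixes x :: "'a::archimedean_field"
  assumes "1 < x"
  shows "\<exists>n. y < x ^ n"
proof -
  obtain n where n: "y < of_nat n * (x - 1)"
    using ex_less_of_nat_mult[of "x - 1" y] assms by auto
  have "1 + of_nat n * (x - 1) \<le> (1 + (x - 1)) ^ n"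
    using assms by (intro Bernoulli_inequality) simp
  then show ?thesis
    using n by (intro exI[of _ n]) simp
qed

lemma divide_power_in_range:
  fixes r :: "'a::field"
  assumes "r \<noteq> 0" "x \<in> range ((^) r)" "x \<noteq> 1"
  shows "x / r \<in> range ((^) r)"
proof -
  obtain i where "x = r ^ i"
    using assms(2) by blast
  with assms(3) obtain j where "x = r * r ^ j"
    by (cases i) auto
  then have "x / r = r ^ j"
    using assms(1) by simp
  then show ?thesis
    by blast
qed

lemma sum_mset_subseteq_replicate_mset:
  fixes b :: "'a::semiring_1"
  assumes "B \<subseteq># replicate_mset N b"
  shows "sum_mset B = of_nat (size B) * b"
  using assms by (elim msubseteq_replicate_msetE) simp

lemma size_replicate_mset_inter_le: "size (replicate_mset N a \<inter># M) \<le> count M a"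
proof -
  have "replicate_mset N a \<inter># M \<subseteq># replicate_mset N a"
    by (rule subset_mset.inf.cobounded1)
  then obtain m where m: "replicate_mset N a \<inter># M = replicate_mset m a"
    by (rule msubseteq_replicate_msetE)
  have "count (replicate_mset N a \<inter># M) a \<le> count M a"
    by simp
  then show ?thesis
    unfolding m by simp
qed

lemma replicate_count_add_filter: "replicate_mset (count M a) a + filter_mset (\<lambda>x. x \<noteq> a) M = M"
  using multiset_partition[of M "\<lambda>x. x = a"] by (simp add: filter_eq_replicate_mset)

lemma nat_fraction_coprime:
  fixes r :: rat
  assumes "0 < r"
  obtains p q :: nat where "r = of_nat p / of_nat q" "coprime p q" "0 < q"
proof -
  obtain a b where ab: "quotient_of r = (a, b)"
    by (cases "quotient_of r")
  have b: "0 < b" and r: "r = of_int a / of_int b" and cp: "coprime a b"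
    using quotient_of_denom_pos[OF ab] quotient_of_div[OF ab] quotient_of_coprime[OF ab] by auto
  have "0 < a"
    using assms b by (simp add: r zero_less_divide_iff)
  then show ?thesis
    using that[of "nat a" "nat b"] r b cp by (simp add: coprime_int_iff[symmetric])
qed

lemma Sr_nonneg:
  assumes "0 < r" "x \<in> Sr r"
  shows "0 \<le> x"
  using assms(2) by (induction rule: Sr.induct) (simp_all add: assms(1) less_imp_le)

lemma Sr_eq_0_or_ge_1:
  assumes "1 \<le> r" "x \<in> Sr r"
  shows "x = 0 \<or> 1 \<le> x"
  using assms(2) by (induction rule: Sr.induct) (auto simp: assms(1))

lemma one_in_Sr: "1 \<in> Sr r"
  using Sr.gen[of r 0] by simp

lemma of_nat_mult_in_Sr: "x \<in> Sr r \<Longrightarrow> of_nat k * x \<in> Sr r"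
  by (induction k) (auto simp: algebra_simps intro: Sr.zero Sr.add)

lemma of_nat_in_Sr: "of_nat k \<in> Sr r"
  using of_nat_mult_in_Sr[OF one_in_Sr] by simp

lemma sum_mset_in_Sr: "set_mset M \<subseteq> Sr r \<Longrightarrow> sum_mset M \<in> Sr r"
  by (induction M) (auto intro: Sr.add Sr.zero)

lemma sum_mset_atoms_in_Sr: "set_mset M \<subseteq> atomsS r \<Longrightarrow> sum_mset M \<in> Sr r"
  by (rule sum_mset_in_Sr) (auto simp: atomsS_def)

lemma Sr_of_nat: "Sr (of_nat n) = range of_nat"
proof
  show "Sr (of_nat n) \<subseteq> range of_nat"
  proof
    fix x assume "x \<in> Sr (of_nat n)"
    then show "x \<in> range of_nat"
    proof (induction rule: Sr.induct)
      case zero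
      show ?case
        using range_eqI[of 0 of_nat 0] by simp
    next
      case (gen k)
      show ?case
        using range_eqI[of _ of_nat "n ^ k"] by simp
    next
      case (add x y)
      then obtain a b where "x = of_nat a" "y = of_nat b"
        by auto
      then show ?case
        using range_eqI[of "x + y" of_nat "a + b"] by simp
    qed
  qed
  show "range of_nat \<subseteq> Sr (of_nat n)"
    using of_nat_in_Sr by auto
qed

lemma Sr_nonzero_eq_power_add: "x \<in> Sr r \<Longrightarrow> x \<noteq> 0 \<Longrightarrow> \<exists>n. \<exists>w\<in>Sr r. x = r ^ n + w"
proof (induction rule: Sr.induct)
  case (gen n)
  show ?case
    by (intro exI[of _ n] bexI[of _ 0] Sr.zero) simp
next
  case (add x y)
  show ?case
  proof (cases "x = 0")
    case False
    then obtain n w where "w \<in> Sr r" "x = r ^ n + w"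
      using add by auto
    then show ?thesis
      using Sr.add[of w r y] add.hyps(2) by (metis add.assoc)
  qed (use add in auto)
qed simp

lemma Sr_eq_of_nat_add_mult: "x \<in> Sr r \<Longrightarrow> \<exists>k. \<exists>y\<in>Sr r. x = of_nat k + r * y"
proof (induction rule: Sr.induct)
  case zero
  then show ?case
    using Sr.zero by force
next
  case (gen n)
  show ?case
  proof (cases n)
    case 0
    then show ?thesis
      using Sr.zero by (intro exI[of _ 1] bexI[of _ 0]) auto
  next
    case (Suc m)
    then show ?thesis
      using Sr.gen[of r m] by (intro exI[of _ 0] bexI[of _ "r ^ m"]) auto
  qed
next
  case (add x y)
  then obtain k1 y1 k2 y2 where "y1 \<in> Sr r" "x = of_nat k1 + r * y1" "y2 \<in> Sr r" "y = of_nat k2 + r * y2"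
    by blast
  then show ?case
    using Sr.add[of y1 r y2] by (intro exI[of _ "k1 + k2"] bexI[of _ "y1 + y2"]) (auto simp: algebra_simps)
qed

lemma dvdS_add_self: "w \<in> Sr r \<Longrightarrow> dvdS r x (x + w)"
  unfolding dvdS_def by blast

lemma dvdS_imp_le: "0 < r \<Longrightarrow> dvdS r x y \<Longrightarrow> x \<le> y"
  unfolding dvdS_def using Sr_nonneg by fastforce

lemma one_dvdS_of_nat: "0 < k \<Longrightarrow> dvdS r 1 (of_nat k)"
  using dvdS_add_self[OF of_nat_in_Sr, of r 1 "k - 1"] by simp

lemma Sr_denominator:
  assumes "r = of_nat p / of_nat q" "0 < q" "x \<in> Sr r"
  shows "\<exists>a j. x * of_nat (q ^ j) = of_nat a"
  using assms(3)
proof (induction rule: Sr.induct)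
  case (gen n)
  have "r ^ n * of_nat (q ^ n) = of_nat (p ^ n)"
    using assms(1,2) by (simp add: power_divide)
  then show ?case
    by blast
next
  case (add x y)
  then obtain a i b j where ab: "x * of_nat (q ^ i) = of_nat a" "y * of_nat (q ^ j) = of_nat b"
    by blast
  have "(x + y) * of_nat (q ^ (i + j))
      = x * of_nat (q ^ i) * of_nat (q ^ j) + y * of_nat (q ^ j) * of_nat (q ^ i)"
    by (simp add: power_add algebra_simps)
  also have "\<dots> = of_nat (a * q ^ j + b * q ^ i)"
    unfolding ab by simp
  finally show ?case
    by blast
qed auto

lemma numerator_dvd:
  assumes r: "r = of_nat p / of_nat q" and cp: "coprime p q" and q: "0 < q"
    and xy: "x \<in> Sr r" "y \<in> Sr r" and e: "of_nat e + r * x = r * y"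
  shows "p dvd e"
proof -
  obtain a i where a: "x * of_nat (q ^ i) = of_nat a"
    using Sr_denominator[OF r q xy(1)] by blast
  obtain b j where b: "y * of_nat (q ^ j) = of_nat b"
    using Sr_denominator[OF r q xy(2)] by blast
  have "of_nat q * of_nat e + of_nat p * x = of_nat p * y"
    using e r q by (simp add: field_simps)
  then have "(of_nat q * of_nat e + of_nat p * x) * of_nat (q ^ i * q ^ j)
      = of_nat p * y * of_nat (q ^ i * q ^ j)"
    by simp
  then have "of_nat (e * q ^ Suc (i + j) + p * (a * q ^ j)) = (of_nat (p * (b * q ^ i)) :: rat)"
    by (simp add: a[symmetric] b[symmetric] power_add algebra_simps)
  then have "e * q ^ Suc (i + j) + p * (a * q ^ j) = p * (b * q ^ i)"
    by (simp only: of_nat_eq_iff)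
  then have "p dvd e * q ^ Suc (i + j)"
    by (metis dvd_add_left_iff dvd_triv_left)
  then show ?thesis
    using cp by (simp add: coprime_dvd_mult_left_iff)
qed

lemma Sr_eq_fraction_add_power_mult:
  assumes r: "r = of_nat p / of_nat q" and q: "0 < q" and x: "x \<in> Sr r"
  shows "\<exists>a. \<exists>z\<in>Sr r. x = of_nat a / of_nat (q ^ m) + r ^ Suc m * z"
  using x
proof (induction rule: Sr.induct)
  case zero
  then show ?case
    using Sr.zero by (intro exI[of _ 0] bexI[of _ 0]) auto
next
  case (gen n)
  show ?case
  proof (cases "n \<le> m")
    case True
    then have "q ^ m = q ^ n * q ^ (m - n)"
      by (simp add: power_add[symmetric])
    then have "r ^ n = of_nat (p ^ n * q ^ (m - n)) / of_nat (q ^ m)"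
      using r q by (simp add: power_divide)
    then show ?thesis
      using Sr.zero by (intro exI[of _ "p ^ n * q ^ (m - n)"] bexI[of _ 0]) auto
  next
    case False
    then have "r ^ n = r ^ (Suc m + (n - Suc m))"
      by simp
    then have "r ^ n = r ^ Suc m * r ^ (n - Suc m)"
      by (simp only: power_add)
    then show ?thesis
      using Sr.gen by (intro exI[of _ 0] bexI[of _ "r ^ (n - Suc m)"]) auto
  qed
next
  case (add x y)
  then obtain a1 z1 a2 z2 where "z1 \<in> Sr r" "x = of_nat a1 / of_nat (q ^ m) + r ^ Suc m * z1"
    "z2 \<in> Sr r" "y = of_nat a2 / of_nat (q ^ m) + r ^ Suc m * z2"
    by blast
  then show ?case
    using Sr.add[of z1 r z2]
    by (intro exI[of _ "a1 + a2"] bexI[of _ "z1 + z2"]) (auto simp: algebra_simps add_divide_distrib)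
qed

lemma Sr_below_power_eq_fraction:
  assumes r: "r = of_nat p / of_nat q" and q: "0 < q" and r1: "1 < r"
    and x: "x \<in> Sr r" "x < r ^ Suc m"
  shows "\<exists>a. x = of_nat a / of_nat (q ^ m)"
proof -
  obtain a z where z: "z \<in> Sr r" "x = of_nat a / of_nat (q ^ m) + r ^ Suc m * z"
    using Sr_eq_fraction_add_power_mult[OF r q x(1)] by blast
  have "z = 0"
  proof (rule ccontr)
    assume "z \<noteq> 0"
    then have "r ^ Suc m \<le> r ^ Suc m * z"
      using Sr_eq_0_or_ge_1[of r z] r1 z(1) by simp
    moreover have "0 \<le> of_nat a / (of_nat (q ^ m) :: rat)"
      by simp
    ultimately show False
      using z(2) x(2) by linarith
  qed
  then show ?thesis
    using z by auto
qed

lemma atom_eq_power: "0 < r \<Longrightarrow> a \<in> atomsS r \<Longrightarrow> \<exists>n. a = r ^ n"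
proof -
  assume r: "0 < r" and a: "a \<in> atomsS r"
  then have "a \<in> Sr r" "a \<noteq> 0"
    by (auto simp: atomsS_def)
  then obtain n w where w: "w \<in> Sr r" "a = r ^ n + w"
    using Sr_nonzero_eq_power_add by blast
  then have "r ^ n = 0 \<or> w = 0"
    using a Sr.gen unfolding atomsS_def by blast
  then show ?thesis
    using r w by auto
qed

lemma one_atom_if_ge_1:
  assumes "1 \<le> r"
  shows "1 \<in> atomsS r"
proof -
  have False if "b \<in> Sr r" "c \<in> Sr r" "1 = b + c" "b \<noteq> 0" "c \<noteq> 0" for b c
  proof -
    have "1 \<le> b" "1 \<le> c"
      using Sr_eq_0_or_ge_1[OF assms] that by auto
    then show False
      using that(3) by linarith
  qed
  then show ?thesis
    unfolding atomsS_def using one_in_Sr by auto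
qed

lemma one_atom_if_numerator_ge_2:
  assumes r: "r = of_nat p / of_nat q" and cp: "coprime p q" and p: "2 \<le> p" and q: "0 < q"
  shows "1 \<in> atomsS r"
proof -
  have r0: "0 < r"
    using r p q by simp
  have below_one: "\<exists>y\<in>Sr r. b = r * y" if b: "b \<in> Sr r" "b < 1" for b
  proof -
    obtain k y where y: "y \<in> Sr r" "b = of_nat k + r * y"
      using Sr_eq_of_nat_add_mult[OF b(1)] by blast
    have "0 \<le> r * y"
      using Sr_nonneg[OF r0 y(1)] r0 by simp
    then have "k = 0"
      using y(2) b(2) by simp
    then show ?thesis
      using y by auto
  qed
  have False if bc: "b \<in> Sr r" "c \<in> Sr r" "1 = b + c" "b \<noteq> 0" "c \<noteq> 0" for b c
  proof -
    have "0 \<le> b" "0 \<le> c"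
      using Sr_nonneg[OF r0] bc by auto
    then have "b < 1" "c < 1"
      using bc by auto
    then obtain yb yc where y: "yb \<in> Sr r" "b = r * yb" "yc \<in> Sr r" "c = r * yc"
      using below_one bc by meson
    have "of_nat 1 + r * 0 = r * (yb + yc)"
      using bc(3) y by (simp add: algebra_simps)
    then have "p dvd 1"
      using numerator_dvd[OF r cp q Sr.zero Sr.add[OF y(1,3)]] by blast
    then show False
      using p by simp
  qed
  then show ?thesis
    unfolding atomsS_def using one_in_Sr by auto
qed

lemma not_atomic_if_numerator_1:
  assumes r: "r = 1 / of_nat q" and q: "2 \<le> q"
  shows "\<not> atomic r"
proof -
  have r0: "0 < r"
    using r q by simp
  have no_atoms: "atomsS r = {}"
  proof (rule ccontr)
    assume "atomsS r \<noteq> {}"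
    then obtain a where a: "a \<in> atomsS r"
      by blast
    then obtain n where n: "a = r ^ n"
      using atom_eq_power[OF r0] by blast
    have "r ^ Suc n + of_nat (q - 1) * r ^ Suc n = of_nat q * r ^ Suc n"
      using q by (simp add: algebra_simps)
    also have "\<dots> = a"
      using r q n by simp
    finally have "a = r ^ Suc n + of_nat (q - 1) * r ^ Suc n"
      by simp
    moreover have "of_nat (q - 1) * r ^ Suc n \<in> Sr r"
      by (intro of_nat_mult_in_Sr Sr.gen)
    moreover have "of_nat (q - 1) * r ^ Suc n \<noteq> 0"
      using q r0 by simp
    ultimately show False
      using a Sr.gen[of r "Suc n"] r0 unfolding atomsS_def by auto
  qed
  have "factorizations r 1 = {}"
    using no_atoms by (auto simp: factorizations_def)
  then show ?thesis
    unfolding atomic_def using one_in_Sr by force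
qed

lemma power_atom_if_gt_1:
  assumes r: "r = of_nat p / of_nat q" and cp: "coprime p q" and q: "2 \<le> q" and r1: "1 < r"
  shows "r ^ Suc m \<in> atomsS r"
proof -
  have False if bc: "b \<in> Sr r" "c \<in> Sr r" "r ^ Suc m = b + c" "b \<noteq> 0" "c \<noteq> 0" for b c
  proof -
    have "0 \<le> b" "0 \<le> c"
      using Sr_nonneg[of r] r1 bc by auto
    then have "b < r ^ Suc m" "c < r ^ Suc m"
      using bc by auto
    then obtain a1 a2 where a: "b = of_nat a1 / of_nat (q ^ m)" "c = of_nat a2 / of_nat (q ^ m)"
      using Sr_below_power_eq_fraction[OF r _ r1] bc q by (meson less_le_trans pos2)
    have "of_nat (p ^ Suc m) = r ^ Suc m * of_nat (q ^ Suc m)"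
      using r q by (simp add: power_divide)
    also have "\<dots> = of_nat (q * (a1 + a2))"
      using bc(3) a q by (simp add: field_simps)
    finally have "q dvd p ^ Suc m"
      by (metis dvd_triv_left of_nat_eq_iff)
    moreover have "coprime q (p ^ Suc m)"
      using cp by (simp add: coprime_commute)
    ultimately have "q dvd 1"
      by (metis coprime_common_divisor dvd_refl)
    then show False
      using q by simp
  qed
  then show ?thesis
    unfolding atomsS_def using Sr.gen[of r "Suc m"] r1 by auto
qed

lemma atomsS_of_nat:
  assumes "1 \<le> n"
  shows "atomsS (of_nat n) = {1}"
proof -
  have "a = 1" if a: "a \<in> atomsS (of_nat n)" for a
  proof -
    obtain k where k: "a = of_nat k" "1 \<le> k"
      using a Sr_of_nat[of n] by (auto simp: atomsS_def)
    then have "a = 1 + of_nat (k - 1)"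
      by simp
    then have "of_nat (k - 1) = (0::rat)"
      using a one_in_Sr of_nat_in_Sr unfolding atomsS_def by force
    then show ?thesis
      using k by simp
  qed
  then show ?thesis
    using one_atom_if_ge_1[of "of_nat n"] assms by auto
qed

lemma small_atom:
  assumes r: "0 < r" "r < 1" and at: "atomic r"
  shows "\<exists>b\<in>atomsS r. of_nat n * b < 1"
proof -
  obtain k where "of_nat n < (1 / r) ^ k"
    using ex_less_power[of "1 / r"] r by auto
  then have k: "of_nat n * r ^ k < 1"
    using r by (simp add: field_simps)
  obtain z where z: "z \<in> factorizations r (r ^ k)"
    using at Sr.gen r unfolding atomic_def by force
  then have "z \<noteq> {#}"
    using r by (auto simp: factorizations_def)
  then obtain b where b: "b \<in># z"
    by blast
  have "0 \<le> sum_mset (z - {#b#})"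
    using z by (intro Sr_nonneg[OF r(1)] sum_mset_atoms_in_Sr)
      (auto simp: factorizations_def dest: in_diffD)
  then have "b \<le> r ^ k"
    using sum_mset.remove[OF b] z by (simp add: factorizations_def)
  then have "of_nat n * b < 1"
    using k by (meson le_less_trans mult_left_mono of_nat_0_le_iff)
  moreover have "b \<in> atomsS r"
    using b z by (auto simp: factorizations_def)
  ultimately show ?thesis
    by blast
qed

subsection \<open>The omega function and the tame degree\<close>

lemma omega_bound_mono: "omega_bound r x m \<Longrightarrow> m \<le> n \<Longrightarrow> omega_bound r x n"
  unfolding omega_bound_def by (meson order_trans)

lemma omegaS_finite_if_omega_bound:
  assumes "omega_bound r x n"
  shows "omegaS r x < \<infinity>"
proof -
  have "\<exists>m>0. omega_bound r x m"
    using omega_bound_mono[OF assms, of "max 1 n"] by (intro exI[of _ "max 1 n"]) simp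
  then show ?thesis
    by (simp add: omegaS_def)
qed

lemma omega_bound_if_omegaS_le:
  assumes "omegaS r x \<le> enat n"
  shows "omega_bound r x n"
proof -
  have ex: "\<exists>m>0. omega_bound r x m"
    using assms by (auto simp: omegaS_def split: if_splits)
  let ?L = "LEAST m. m > 0 \<and> omega_bound r x m"
  have "omega_bound r x ?L"
    using LeastI_ex[OF ex] by blast
  moreover have "?L \<le> n"
    using assms ex by (simp add: omegaS_def)
  ultimately show ?thesis
    by (rule omega_bound_mono)
qed

lemma omega_monoid_finite_imp_uniform_bound:
  assumes "omega_monoid r < \<infinity>"
  obtains N where "\<And>a. a \<in> atomsS r \<Longrightarrow> omega_bound r a N"
proof -
  obtain N where "omega_monoid r = enat N"
    using assms by (cases "omega_monoid r") auto
  then have "omegaS r a \<le> enat N" if "a \<in> atomsS r" for a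
    using SUP_upper[OF that, of "omegaS r"] by (simp add: omega_monoid_def)
  then show ?thesis
    using that omega_bound_if_omegaS_le by blast
qed

text \<open>In a cancellative monoid \<open>\<omega>(a) \<le> max 1 t(a)\<close>: if \<open>a\<close> divides the sum of a factorization
  \<open>z\<close>, a factorization \<open>z'\<close> containing \<open>a\<close> at distance \<open>\<le> t(a)\<close> shows that \<open>a\<close> divides the sum of
  \<open>z - gcd(z, z')\<close>, unless \<open>a\<close> already occurs in \<open>gcd(z, z')\<close>.\<close>

lemma omega_bound_if_tame_bound:
  assumes "tame_bound r a n"
  shows "omega_bound r a (max 1 n)"
  unfolding omega_bound_def
proof (intro allI impI)
  fix A assume A: "set_mset A \<subseteq> atomsS r" and dvd: "dvdS r a (sum_mset A)"
  have "A \<in> factorizations r (sum_mset A)"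
    using A by (simp add: factorizations_def)
  then obtain z where z: "z \<in> factorizations r (sum_mset A)" "a \<in># z" "fdist A z \<le> n"
    using assms dvd sum_mset_atoms_in_Sr[OF A] unfolding tame_bound_def by blast
  define g where "g = A \<inter># z"
  show "\<exists>B. B \<subseteq># A \<and> size B \<le> max 1 n \<and> dvdS r a (sum_mset B)"
  proof (cases "a \<in># g")
    case True
    then have "{#a#} \<subseteq># A"
      by (simp add: g_def)
    then show ?thesis
      using dvdS_add_self[OF Sr.zero, of r a] by (intro exI[of _ "{#a#}"]) auto
  next
    case False
    then have a_in: "a \<in># z - g"
      using z(2) by (simp add: in_diff_count not_in_iff)
    have "g \<subseteq># A" "g \<subseteq># z"
      by (simp_all add: g_def)
    then have "sum_mset (A - g) = sum_mset (z - g)"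
      using z(1) by (simp add: sum_mset_diff factorizations_def)
    also have "\<dots> = a + sum_mset (z - g - {#a#})"
      using sum_mset.remove[OF a_in] .
    finally have "dvdS r a (sum_mset (A - g))"
      using z(1) by (auto intro!: dvdS_add_self sum_mset_atoms_in_Sr simp: factorizations_def
          dest!: in_diffD)
    moreover have "size (A - g) \<le> n"
      using z(3) size_Diff_submset[OF \<open>g \<subseteq># A\<close>] by (simp add: fdist_def flip: g_def)
    ultimately show ?thesis
      by (intro exI[of _ "A - g"]) auto
  qed
qed

lemma tame_bound_if_locally_tame:
  "locally_tame r \<Longrightarrow> a \<in> atomsS r \<Longrightarrow> \<exists>n. tame_bound r a n"
  unfolding locally_tame_def tame_degree_def by (auto split: if_splits)

lemma locally_tame_if_globally_tame: "globally_tame r \<Longrightarrow> locally_tame r"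
  unfolding globally_tame_def locally_tame_def by (meson SUP_upper le_less_trans)

subsection \<open>The case \<open>r \<in> \<nat>\<close>\<close>

lemma of_nat_case:
  assumes "1 \<le> n"
  shows "omega_monoid (of_nat n) < \<infinity> \<and> globally_tame (of_nat n)"
proof -
  let ?r = "of_nat n :: rat"
  have atoms: "atomsS ?r = {1}"
    using atomsS_of_nat[OF assms] .
  have r0: "0 < ?r"
    using assms by simp
  have "omega_bound ?r 1 1"
    unfolding omega_bound_def
  proof (intro allI impI)
    fix A assume A: "set_mset A \<subseteq> atomsS ?r" "dvdS ?r 1 (sum_mset A)"
    then have "A \<noteq> {#}"
      using dvdS_imp_le[OF r0 A(2)] by auto
    then have "{#1#} \<subseteq># A"
      using A(1) atoms by auto
    then show "\<exists>B. B \<subseteq># A \<and> size B \<le> 1 \<and> dvdS ?r 1 (sum_mset B)"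
      using dvdS_add_self[OF Sr.zero, of ?r 1] by (intro exI[of _ "{#1#}"]) auto
  qed
  then have "omega_monoid ?r < \<infinity>"
    using omegaS_finite_if_omega_bound by (simp add: omega_monoid_def atoms)
  moreover have "tame_bound ?r 1 0"
    unfolding tame_bound_def
  proof (intro ballI impI)
    fix x z assume x: "dvdS ?r 1 x" and z: "z \<in> factorizations ?r x"
    then have "z \<noteq> {#}"
      using dvdS_imp_le[OF r0 x] by (auto simp: factorizations_def)
    then have "1 \<in># z"
      using z atoms by (auto simp: factorizations_def)
    then show "\<exists>z'\<in>factorizations ?r x. 1 \<in># z' \<and> fdist z z' \<le> 0"
      using z by (intro bexI[of _ z]) (auto simp: fdist_def)
  qed
  then have "tame_degree ?r 1 < \<infinity>"
    by (auto simp: tame_degree_def)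
  then have "globally_tame ?r"
    by (simp add: globally_tame_def atoms)
  ultimately show ?thesis
    by blast
qed

subsection \<open>The case \<open>r < 1\<close>\<close>

text \<open>Some atom \<open>b\<close> has \<open>n b < 1\<close>; a multiple \<open>c = q\<^sup>j b \<in> \<nat>\<close> is divisible by \<open>1\<close>, but no
  sum of at most \<open>n\<close> copies of \<open>b\<close> is.\<close>

lemma not_omega_bound_one_if_lt_1:
  assumes r: "r = of_nat p / of_nat q" and q: "0 < q" and r1: "0 < r" "r < 1" and at: "atomic r"
  shows "\<not> omega_bound r 1 n"
proof
  assume bound: "omega_bound r 1 n"
  obtain b where b: "b \<in> atomsS r" "of_nat n * b < 1"
    using small_atom[OF r1 at] by blast
  then have b0: "0 < b" "b \<in> Sr r"
    using Sr_nonneg[OF r1(1)] by (force simp: atomsS_def)+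
  obtain c j where c: "b * of_nat (q ^ j) = of_nat c"
    using Sr_denominator[OF r q b0(2)] by blast
  have "0 < c"
    using c b0 q by (metis of_nat_0_less_iff mult_pos_pos zero_less_power)
  define A where "A = replicate_mset (q ^ j) b"
  have "set_mset A \<subseteq> atomsS r" "dvdS r 1 (sum_mset A)"
    using b c one_dvdS_of_nat[OF \<open>0 < c\<close>] by (auto simp: A_def mult.commute)
  then obtain B where B: "B \<subseteq># A" "size B \<le> n" "dvdS r 1 (sum_mset B)"
    using bound unfolding omega_bound_def by blast
  have "1 \<le> of_nat (size B) * b"
    using dvdS_imp_le[OF r1(1) B(3)] sum_mset_subseteq_replicate_mset[OF B(1)[unfolded A_def]]
    by simp
  also have "\<dots> \<le> of_nat n * b"
    using B(2) b0 by (simp add: mult_right_mono)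
  finally show False
    using b(2) by simp
qed

lemma lt_1_case:
  assumes r: "r = of_nat p / of_nat q" and cp: "coprime p q" and q: "2 \<le> q"
    and r0: "0 < r" and r1: "r < 1" and at: "atomic r"
  shows "omega_monoid r = \<infinity> \<and> \<not> locally_tame r"
proof -
  have "p \<noteq> 1"
    using not_atomic_if_numerator_1[of r q] r q at by auto
  moreover have "p \<noteq> 0"
    using r r0 by (metis div_0 of_nat_0 less_irrefl)
  ultimately have one: "1 \<in> atomsS r"
    using one_atom_if_numerator_ge_2[OF r cp _] q by simp
  have no_bound: "\<not> omega_bound r 1 n" for n
    using not_omega_bound_one_if_lt_1[OF r _ r0 r1 at] q by simp
  then have "omega_monoid r = \<infinity>"
    using omega_monoid_finite_imp_uniform_bound one by (metis enat_ord_simps(4))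
  moreover have "\<not> locally_tame r"
    using tame_bound_if_locally_tame[OF _ one] omega_bound_if_tame_bound no_bound by blast
  ultimately show ?thesis
    by blast
qed

subsection \<open>The case \<open>r > 1\<close>\<close>

text \<open>\<open>r\<^sup>m\<close> divides \<open>p\<^sup>m = q\<^sup>m r\<^sup>m\<close>, a sum of \<open>p\<^sup>m\<close> copies of the atom \<open>1\<close>, but no sum of fewer
  than \<open>r\<^sup>m\<close> of them.\<close>

lemma omega_bound_power_imp_le:
  assumes r: "r = of_nat p / of_nat q" and q: "0 < q" and r1: "1 < r"
    and bound: "omega_bound r (r ^ m) n"
  shows "r ^ m \<le> of_nat n"
proof -
  define A where "A = replicate_mset (p ^ m) (1::rat)"
  have "1 \<le> q ^ m"
    using q by simp
  then have "r ^ m + of_nat (q ^ m - 1) * r ^ m = of_nat (q ^ m) * r ^ m"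
    by (simp add: algebra_simps)
  also have "\<dots> = of_nat (p ^ m)"
    using r q by (simp add: power_divide)
  finally have eq: "r ^ m + of_nat (q ^ m - 1) * r ^ m = of_nat (p ^ m)" .
  have "dvdS r (r ^ m) (r ^ m + of_nat (q ^ m - 1) * r ^ m)"
    by (intro dvdS_add_self of_nat_mult_in_Sr Sr.gen)
  then have "dvdS r (r ^ m) (of_nat (p ^ m))"
    unfolding eq .
  then have "dvdS r (r ^ m) (sum_mset A)"
    by (simp add: A_def)
  moreover have "set_mset A \<subseteq> atomsS r"
    using one_atom_if_ge_1 r1 by (simp add: A_def)
  ultimately obtain B where B: "B \<subseteq># A" "size B \<le> n" "dvdS r (r ^ m) (sum_mset B)"
    using bound unfolding omega_bound_def by blast
  have "r ^ m \<le> of_nat (size B)"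
    using dvdS_imp_le[OF _ B(3)] sum_mset_subseteq_replicate_mset[OF B(1)[unfolded A_def]] r1
    by simp
  also have "\<dots> \<le> of_nat n"
    using B(2) by simp
  finally show ?thesis .
qed

lemma omega_monoid_infinite_if_gt_1:
  assumes r: "r = of_nat p / of_nat q" and cp: "coprime p q" and q: "2 \<le> q" and r1: "1 < r"
  shows "omega_monoid r = \<infinity>"
proof (rule ccontr)
  assume "omega_monoid r \<noteq> \<infinity>"
  then obtain N where N: "\<And>a. a \<in> atomsS r \<Longrightarrow> omega_bound r a N"
    using omega_monoid_finite_imp_uniform_bound by (metis enat_ord_simps(4))
  obtain k where "of_nat N < r ^ k"
    using ex_less_power[OF r1] by blast
  also have "\<dots> \<le> r ^ Suc k"
    using r1 by simp
  also have "\<dots> \<le> of_nat N"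
    using omega_bound_power_imp_le[OF r _ r1 N[OF power_atom_if_gt_1[OF r cp q r1]]] q by simp
  finally show False
    by simp
qed

text \<open>The copies of \<open>1\<close> in \<open>w\<close> number \<open>t p\<close>; they become \<open>t q\<close> copies, and every other element
  is divided by \<open>r\<close>.\<close>

lemma power_multiset_descent:
  assumes r: "r = of_nat p / of_nat q" and cp: "coprime p q" and q: "0 < q" and pq: "q < p"
    and w: "set_mset w \<subseteq> range ((^) r)" "1 \<in># w"
    and D: "D \<in> Sr r" "sum_mset w = r * D"
  obtains w' where "set_mset w' \<subseteq> range ((^) r)" "1 \<in># w'" "sum_mset w' = D" "size w' < size w"
proof -
  have r0: "0 < r"
    using r q pq by simp
  define e where "e = count w 1"
  define v where "v = filter_mset (\<lambda>x. x \<noteq> 1) w"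
  define u where "u = image_mset (\<lambda>x. x / r) v"
  have w_split: "w = replicate_mset e 1 + v"
    unfolding e_def v_def by (simp add: replicate_count_add_filter)
  have u_powers: "set_mset u \<subseteq> range ((^) r)"
    using w(1) r0 by (auto simp: u_def v_def intro: divide_power_in_range)
  then have "sum_mset u \<in> Sr r"
    by (intro sum_mset_in_Sr) (use Sr.gen in blast)
  moreover have sum_v: "sum_mset v = r * sum_mset u"
    using r0 by (simp add: u_def sum_mset_distrib_left)
  then have "of_nat e + r * sum_mset u = r * D"
    using w_split D(2) by simp
  ultimately have "p dvd e"
    using numerator_dvd[OF r cp q _ D(1)] by blast
  then obtain t where t: "e = p * t" ..
  have "0 < e"
    using w(2) by (simp add: e_def)
  then have "0 < t"
    using t by (cases t) auto
  define w' where "w' = u + replicate_mset (t * q) 1"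
  have "r * of_nat (t * q) = of_nat e"
    using r q by (simp add: t)
  then have "r * (sum_mset u + of_nat (t * q)) = r * D"
    using \<open>of_nat e + r * sum_mset u = r * D\<close> by (metis add.commute distrib_left)
  then have "sum_mset w' = D"
    using r0 by (simp add: w'_def)
  moreover have "t * q < p * t"
    using \<open>0 < t\<close> pq by simp
  then have "size w' < size w"
    using w_split by (simp add: w'_def u_def t)
  moreover have "1 \<in> range ((^) r)"
    by (metis power_0 rangeI)
  then have "set_mset w' \<subseteq> range ((^) r)"
    using u_powers by (auto simp: w'_def)
  moreover have "1 \<in># w'"
    using \<open>0 < t\<close> q by (simp add: w'_def)
  ultimately show ?thesis
    using that by blast
qed

lemma size_power_multiset_gt:
  fixes r :: rat
  assumes r: "r = of_nat p / of_nat q" and cp: "coprime p q" and q: "0 < q" and pq: "q < p"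
  shows "set_mset w \<subseteq> range ((^) r) \<Longrightarrow> 1 \<in># w \<Longrightarrow> sum_mset w = of_nat d * r ^ k \<Longrightarrow> k < size w"
proof (induction k arbitrary: w)
  case 0
  then show ?case
    by (cases w) auto
next
  case (Suc k)
  have "of_nat d * r ^ k \<in> Sr r"
    by (intro of_nat_mult_in_Sr Sr.gen)
  moreover have "sum_mset w = r * (of_nat d * r ^ k)"
    using Suc.prems(3) by (simp add: algebra_simps)
  ultimately obtain w' where w': "set_mset w' \<subseteq> range ((^) r)" "1 \<in># w'"
    "sum_mset w' = of_nat d * r ^ k" and "size w' < size w"
    using power_multiset_descent[OF r cp q pq Suc.prems(1,2)] by blast
  moreover have "k < size w'"
    using Suc.IH[OF w'] .
  ultimately show ?case
    by simp
qed

lemma factorization_with_one_size_gt: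
  assumes r: "r = of_nat p / of_nat q" and cp: "coprime p q" and q: "0 < q" and r1: "1 < r"
    and "0 < k" and z: "set_mset z \<subseteq> atomsS r" "1 \<in># z" "sum_mset z = of_nat N * r ^ k"
  shows "k < size z - count z (r ^ k)"
proof -
  have r0: "0 < r"
    using r1 by simp
  have "(of_nat q :: rat) < r * of_nat q"
    using r1 q by simp
  also have "\<dots> = of_nat p"
    using r q by simp
  finally have pq: "q < p"
    by simp
  define c where "c = count z (r ^ k)"
  define v where "v = filter_mset (\<lambda>x. x \<noteq> r ^ k) z"
  have z_split: "z = replicate_mset c (r ^ k) + v"
    unfolding c_def v_def by (simp add: replicate_count_add_filter)
  have v_atoms: "set_mset v \<subseteq> atomsS r"
    using z(1) by (auto simp: v_def)
  have "r ^ k \<noteq> 1"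
    using one_less_power[OF r1 \<open>0 < k\<close>] by simp
  then have "1 \<in># v"
    using z(2) by (simp add: v_def)
  have sum_v: "of_nat c * r ^ k + sum_mset v = of_nat N * r ^ k"
    using z(3) z_split by simp
  moreover have "0 \<le> sum_mset v"
    using Sr_nonneg[OF r0 sum_mset_atoms_in_Sr[OF v_atoms]] .
  ultimately have "of_nat c * r ^ k \<le> of_nat N * r ^ k"
    by linarith
  then have "c \<le> N"
    using r0 by (subst (asm) mult_le_cancel_right_pos) (simp_all only: of_nat_le_iff zero_less_power)
  then have "sum_mset v = of_nat (N - c) * r ^ k"
    using sum_v by (simp add: algebra_simps)
  moreover have "set_mset v \<subseteq> range ((^) r)"
    using v_atoms atom_eq_power[OF r0] by blast
  ultimately have "k < size v"
    using size_power_multiset_gt[OF r cp q pq] \<open>1 \<in># v\<close> by simp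
  moreover have "size z = c + size v"
    by (subst z_split) simp
  ultimately show ?thesis
    unfolding c_def[symmetric] by simp
qed

text \<open>The factorization \<open>q\<^sup>k \<cdot> r\<^sup>k\<close> of \<open>p\<^sup>k\<close>, with \<open>k = n + 1\<close>, is far from every factorization containing
  \<open>1\<close>.\<close>

lemma not_tame_bound_one_if_gt_1:
  assumes r: "r = of_nat p / of_nat q" and cp: "coprime p q" and q: "2 \<le> q" and r1: "1 < r"
  shows "\<not> tame_bound r 1 n"
proof
  assume bound: "tame_bound r 1 n"
  define k where "k = Suc n"
  have rk: "of_nat (p ^ k) = of_nat (q ^ k) * r ^ k"
    using r q by (simp add: power_divide)
  define z where "z = replicate_mset (q ^ k) (r ^ k)"
  have "z \<in> factorizations r (of_nat (p ^ k))"
    using power_atom_if_gt_1[OF r cp q r1, of n] rk by (simp add: z_def k_def factorizations_def)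
  moreover have "0 < p"
    using r r1 by (cases p) auto
  then have "dvdS r 1 (of_nat (p ^ k))"
    by (intro one_dvdS_of_nat) simp
  ultimately obtain z' where z': "z' \<in> factorizations r (of_nat (p ^ k))" "1 \<in># z'" "fdist z z' \<le> n"
    using bound of_nat_in_Sr unfolding tame_bound_def by blast
  then have "k < size z' - count z' (r ^ k)"
    using factorization_with_one_size_gt[OF r cp _ r1, of k z' "q ^ k"] q rk
    by (simp add: k_def factorizations_def)
  moreover have "size (z \<inter># z') \<le> count z' (r ^ k)"
    unfolding z_def by (rule size_replicate_mset_inter_le)
  ultimately have "n < size z' - size (z \<inter># z')"
    by (simp add: k_def)
  then show False
    using z'(3) by (simp add: fdist_def)
qed

lemma gt_1_case:
  assumes r: "r = of_nat p / of_nat q" and cp: "coprime p q" and q: "2 \<le> q" and r1: "1 < r"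
  shows "omega_monoid r = \<infinity> \<and> \<not> locally_tame r"
proof -
  have "1 \<in> atomsS r"
    using r1 by (simp add: one_atom_if_ge_1)
  then have "\<not> locally_tame r"
    using tame_bound_if_locally_tame not_tame_bound_one_if_gt_1[OF assms] by blast
  then show ?thesis
    using omega_monoid_infinite_if_gt_1[OF assms] by blast
qed

lemma non_integer_case:
  fixes r :: rat
  assumes "0 < r" "atomic r" "\<nexists>n. r = of_nat n"
  shows "omega_monoid r = \<infinity> \<and> \<not> locally_tame r"
proof -
  obtain p q where r: "r = of_nat p / of_nat q" and cp: "coprime p q" and "0 < q"
    using nat_fraction_coprime[OF assms(1)] .
  have "q \<noteq> 1"
  proof
    assume "q = 1"
    then have "r = of_nat p"
      using r by simp
    with assms(3) show False
      by blast
  qed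
  with \<open>0 < q\<close> have q: "2 \<le> q"
    by simp
  have "r \<noteq> of_nat 1"
    using assms(3) by blast
  then consider "r < 1" | "1 < r"
    by fastforce
  then show ?thesis
  proof cases
    case 1
    then show ?thesis
      using lt_1_case[OF r cp q assms(1) _ assms(2)] by blast
  next
    case 2
    then show ?thesis
      using gt_1_case[OF r cp q] by blast
  qed
qed

theorem theorem5p5:
  fixes r :: rat
  assumes "r > 0" and "atomic r"
  shows "((\<exists>n::nat. r = of_nat n) \<longleftrightarrow> omega_monoid r < \<infinity>)
       \<and> (omega_monoid r < \<infinity> \<longleftrightarrow> globally_tame r)
       \<and> (globally_tame r \<longleftrightarrow> locally_tame r)"
proof (cases "\<exists>n::nat. r = of_nat n")
  case True
  then obtain n where n: "r = of_nat n"
    by blast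
  with assms(1) have "1 \<le> n"
    by (cases n) auto
  then have "omega_monoid r < \<infinity>" "globally_tame r"
    using of_nat_case n by blast+
  then show ?thesis
    using True locally_tame_if_globally_tame by blast
next
  case False
  then have "omega_monoid r = \<infinity>" "\<not> locally_tame r"
    using non_integer_case[OF assms False] by blast+
  then show ?thesis
    using False locally_tame_if_globally_tame by auto
qed

end
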